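(* Let $\alpha=1^{a_1}2^{a_2}\cdots$ be a partition and $n\geq 0$ an integer. Then $$\Big\{\binom X\alpha\Big\}_n=\begin{cases}\dfrac{\mathrm{sgn}(\alpha)}{z_\alpha} & \text{if } n\in\{|\alpha|,|\alpha|+1\},\\[2mm] 0 & \text{otherwise,}\end{cases}$$ where $z_\alpha=\prod_i i^{a_i}a_i!$ and $\mathrm{sgn}(\alpha)=(-1)^{|\alpha|-l(\alpha)}$ is the value of the sign character on a permutation of cycle type $\alpha$.
   Context: For $i\geq 1$, $X_i$ is the class function on $S_n$ (for every $n$) with $X_i(\sigma)$ = number of cycles of length $i$ of $\sigma$. A partition $\alpha$ is written in exponential notation $1^{a_1}2^{a_2}\cdots$ where $a_i$ is the number of parts equal to $i$; $|\alpha|=\sum_i ia_i$ and $l(\alpha)=\sum_i a_i$. Define $\binom X\alpha=\prod_i\binom{X_i}{a_i}\in\mathbb C[X_1,X_2,\dotsc]$. For $p\in\mathbb C[X_1,X_2,\dotsc]$ the signed moment is $\{p\}_n=\frac1{n!}\sum_{\sigma\in S_n}\mathrm{sgn}(\sigma)\,p(X_1(\sigma),X_2(\sigma),\dotsc)$ (with $S_0$ the trivial group). *)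

theory Defs
  imports Complex_Main "HOL-Combinatorics.Combinatorics"
begin

text \<open>Permutations in S_n are modelled as functions nat => nat permuting {0..<n}.
  X_i(sigma) = number of cycles (orbits, fixed points included) of length i.\<close>

definition cycle_count :: "nat \<Rightarrow> nat \<Rightarrow> (nat \<Rightarrow> nat) \<Rightarrow> nat" where
  "cycle_count n i \<sigma> = card {orbit \<sigma> x | x. x \<in> {0..<n} \<and> card (orbit \<sigma> x) = i}"

text \<open>A partition alpha = 1^{a_1} 2^{a_2} ... is given by its multiplicity function a
  (a 0 = 0, finite support).\<close>

definition is_partition :: "(nat \<Rightarrow> nat) \<Rightarrow> bool" where
  "is_partition a \<longleftrightarrow> a 0 = 0 \<and> finite {i. a i \<noteq> 0}"

definition part_size :: "(nat \<Rightarrow> nat) \<Rightarrow> nat" where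
  "part_size a = (\<Sum>i\<in>{i. a i \<noteq> 0}. i * a i)"

definition part_length :: "(nat \<Rightarrow> nat) \<Rightarrow> nat" where
  "part_length a = (\<Sum>i\<in>{i. a i \<noteq> 0}. a i)"

definition z_part :: "(nat \<Rightarrow> nat) \<Rightarrow> nat" where
  "z_part a = (\<Prod>i\<in>{i. a i \<noteq> 0}. i ^ a i * fact (a i))"

definition sgn_part :: "(nat \<Rightarrow> nat) \<Rightarrow> int" where
  "sgn_part a = (-1) ^ (part_size a - part_length a)"

definition binomX :: "(nat \<Rightarrow> nat) \<Rightarrow> nat \<Rightarrow> (nat \<Rightarrow> nat) \<Rightarrow> complex" where
  "binomX a n \<sigma> = (\<Prod>i\<in>{i. a i \<noteq> 0}. of_nat (cycle_count n i \<sigma> choose a i))"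

definition signed_moment :: "nat \<Rightarrow> ((nat \<Rightarrow> nat) \<Rightarrow> complex) \<Rightarrow> complex" where
  "signed_moment n p = (1 / of_nat (fact n)) *
     (\<Sum>\<sigma>\<in>{\<sigma>. \<sigma> permutes {0..<n}}. of_int (sign \<sigma>) * p \<sigma>)"

end

theory Submission
  imports Defs
begin

text \<open>
  Write \<open>S(A, \<alpha>)\<close> for the sum of \<open>sgn \<sigma> \<cdot> binom(X, \<alpha>)(\<sigma>)\<close> over the permutations
  \<open>\<sigma>\<close> of a finite set \<open>A\<close>, so that the signed moment is \<open>S({0..<n}, \<alpha>) / n!\<close>.
  If \<open>a\<^sub>k > 0\<close>, the identity \<open>a\<^sub>k binom(c, a\<^sub>k) = c binom(c - 1, a\<^sub>k - 1)\<close> for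
  \<open>c = X\<^sub>k(\<sigma>)\<close> turns \<open>a\<^sub>k binom(X, \<alpha>)(\<sigma>)\<close> into a sum, over the \<open>k\<close>-cycles \<open>Q\<close> of
  \<open>\<sigma>\<close>, of \<open>binom(X, \<alpha> - e\<^sub>k)\<close> at the restriction of \<open>\<sigma>\<close> to \<open>A - Q\<close>. Splitting
  \<open>\<sigma>\<close> into a cyclic permutation of \<open>Q\<close> and a permutation of \<open>A - Q\<close>, and using that
  the \<open>(k - 1)!\<close> cyclic permutations of \<open>Q\<close> all have sign \<open>(-1)\<^bsup>k - 1\<^esup>\<close>, gives
  \<open>a\<^sub>k S(A, \<alpha>) = (-1)\<^bsup>k - 1\<^esup> (k - 1)!\<close> times the sum of \<open>S(A - Q, \<alpha> - e\<^sub>k)\<close>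
  over the \<open>k\<close>-subsets \<open>Q\<close> of \<open>A\<close>.
  Induction on \<open>l(\<alpha>)\<close> then shows \<open>z\<^sub>\<alpha> S(A, \<alpha>) = sgn(\<alpha>) |A|!\<close> if
  \<open>|A| \<in> {|\<alpha>|, |\<alpha>| + 1}\<close> and \<open>0\<close> otherwise; for the empty partition this is the
  fact that the signs of all permutations of \<open>A\<close> cancel unless \<open>|A| \<le> 1\<close>.
\<close>

section \<open>Cyclic permutations\<close>

lemma funpow_cycle_of_list_hd:
  assumes "distinct L" "L \<noteq> []"
  shows "(cycle_of_list L ^^ i) (hd L) = L ! (i mod length L)"
proof -
  have "map (cycle_of_list L ^^ i) L = rotate i L"
    using cyclic_rotation[OF assms(1)] .
  then have "map (cycle_of_list L ^^ i) L ! 0 = rotate i L ! 0"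
    by simp
  then show ?thesis
    using assms by (simp add: nth_rotate hd_conv_nth)
qed

lemma orbit_cycle_of_list_hd:
  assumes "distinct L" "L \<noteq> []"
  shows "orbit (cycle_of_list L) (hd L) = set L"
proof
  show "orbit (cycle_of_list L) (hd L) \<subseteq> set L"
    unfolding orbit_altdef using funpow_cycle_of_list_hd[OF assms] assms by auto
next
  show "set L \<subseteq> orbit (cycle_of_list L) (hd L)"
  proof
    fix y assume "y \<in> set L"
    then obtain j where j: "j < length L" "y = L ! j"
      by (auto simp: in_set_conv_nth)
    define m where "m = (if j = 0 then length L else j)"
    have "0 < m" and "(cycle_of_list L ^^ m) (hd L) = y"
      using j assms funpow_cycle_of_list_hd[OF assms, of m] by (auto simp: m_def)
    then show "y \<in> orbit (cycle_of_list L) (hd L)"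
      unfolding orbit_altdef by blast
  qed
qed

lemma cyclic_on_cycle_of_list:
  assumes "distinct L" "L \<noteq> []"
  shows "cyclic_on (cycle_of_list L) (set L)"
  using orbit_cycle_of_list_hd[OF assms] assms by (intro cyclic_on_singleI[of "hd L"]) auto

lemma sign_cycle_of_list:
  assumes "distinct L"
  shows "sign (cycle_of_list L) = (-1) ^ (length L - 1)"
  using assms
proof (induction L rule: cycle_of_list.induct)
  case (1 i j cs)
  have "sign (cycle_of_list (i # j # cs)) = sign (transpose i j) * sign (cycle_of_list (j # cs))"
    by (simp add: sign_compose permutation_swap_id permutation_of_cycle)
  also have "\<dots> = - ((-1) ^ length cs)"
    using 1 by (simp add: sign_swap_id)
  finally show ?case
    by (simp only: cycle_of_list.simps length_Cons) simp
qed auto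

lemma inj_on_cycle_of_list_Cons:
  "inj_on (\<lambda>r. cycle_of_list (x # r)) {r. distinct (x # r)}"
proof
  fix r1 r2
  assume d1: "r1 \<in> {r. distinct (x # r)}" and d2: "r2 \<in> {r. distinct (x # r)}"
    and eq: "cycle_of_list (x # r1) = cycle_of_list (x # r2)"
  have "set (x # r1) = set (x # r2)"
    using orbit_cycle_of_list_hd[of "x # r1"] orbit_cycle_of_list_hd[of "x # r2"] d1 d2 eq by simp
  then have len: "length (x # r1) = length (x # r2)"
    using d1 d2 by (metis mem_Collect_eq distinct_card)
  have "(x # r1) ! i = (x # r2) ! i" if "i < length (x # r1)" for i
    using funpow_cycle_of_list_hd[of "x # r1" i] funpow_cycle_of_list_hd[of "x # r2" i]
      d1 d2 eq that len by simp
  with len show "r1 = r2"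
    by (metis nth_equalityI list.inject)
qed

definition cyclic_perms :: "'a set \<Rightarrow> ('a \<Rightarrow> 'a) set" where
  "cyclic_perms Q = {g. g permutes Q \<and> cyclic_on g Q}"

lemma cyclic_perm_eq_cycle_of_list:
  assumes "g \<in> cyclic_perms Q" "x \<in> Q"
  obtains r where "r \<in> permutations_of_set (Q - {x})" "g = cycle_of_list (x # r)"
proof -
  have g: "g permutes Q" "cyclic_on g Q"
    using assms(1) by (auto simp: cyclic_perms_def)
  have pg: "permutation g"
    using g finite_cyclic_on by (auto simp: permutation_permutes)
  define L where "L = support g x"
  have "distinct L"
    unfolding L_def by (rule cycle_of_permutation[OF pg])
  have "set L = Q"
  proof -
    have "set L = orbit g x"
      unfolding L_def support_set[OF pg] orbit_altdef_permutation[OF pg] by auto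
    then show ?thesis
      using orbit_cyclic_eq3[OF g(2) assms(2)] by simp
  qed
  have "L = x # tl L"
    using least_power_of_permutation(2)[OF pg]
    by (simp add: L_def upt_conv_Cons)
  have "g = cycle_of_list L"
  proof
    fix b show "g b = cycle_of_list L b"
    proof (cases "b \<in> set L")
      case True
      then show ?thesis
        unfolding L_def using cycle_restrict[OF pg] by simp
    next
      case False
      then show ?thesis
        using g(1) \<open>set L = Q\<close> by (simp add: permutes_not_in id_outside_supp)
    qed
  qed
  moreover have "tl L \<in> permutations_of_set (Q - {x})"
    using \<open>distinct L\<close> \<open>set L = Q\<close> \<open>L = x # tl L\<close>
    by (metis distinct.simps(2) list.simps(15) Diff_insert_absorb permutations_of_setI)
  ultimately show ?thesis
    using that \<open>L = x # tl L\<close> by metis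
qed

lemma cyclic_perms_eq_image:
  assumes "x \<in> Q"
  shows "cyclic_perms Q = (\<lambda>r. cycle_of_list (x # r)) ` permutations_of_set (Q - {x})"
proof
  show "cyclic_perms Q \<subseteq> (\<lambda>r. cycle_of_list (x # r)) ` permutations_of_set (Q - {x})"
    using cyclic_perm_eq_cycle_of_list[OF _ assms] by blast
next
  show "(\<lambda>r. cycle_of_list (x # r)) ` permutations_of_set (Q - {x}) \<subseteq> cyclic_perms Q"
  proof clarify
    fix r assume r: "r \<in> permutations_of_set (Q - {x})"
    then have "distinct (x # r)" "set (x # r) = Q"
      using assms by (auto simp: permutations_of_set_def)
    then show "cycle_of_list (x # r) \<in> cyclic_perms Q"
      using cycle_permutes[of "x # r"] cyclic_on_cycle_of_list[of "x # r"]
      by (simp add: cyclic_perms_def)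
  qed
qed

lemma sum_sign_cyclic_perms:
  assumes "finite Q" "Q \<noteq> {}"
  shows "(\<Sum>g\<in>cyclic_perms Q. sign g) = (-1) ^ (card Q - 1) * fact (card Q - 1)"
proof -
  obtain x where x: "x \<in> Q"
    using assms(2) by blast
  have inj: "inj_on (\<lambda>r. cycle_of_list (x # r)) (permutations_of_set (Q - {x}))"
    by (rule inj_on_subset[OF inj_on_cycle_of_list_Cons]) (auto simp: permutations_of_set_def)
  have sign: "sign (cycle_of_list (x # r)) = (-1) ^ (card Q - 1)"
    if "r \<in> permutations_of_set (Q - {x})" for r
  proof -
    have "distinct (x # r)" "set (x # r) = Q"
      using that x by (auto simp: permutations_of_set_def)
    then show ?thesis
      using sign_cycle_of_list distinct_card by metis
  qed
  have "(\<Sum>g\<in>cyclic_perms Q. sign g) =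
      (\<Sum>r\<in>permutations_of_set (Q - {x}). sign (cycle_of_list (x # r)))"
    unfolding cyclic_perms_eq_image[OF x] by (rule sum.reindex[OF inj, unfolded comp_def])
  also have "\<dots> = (\<Sum>r\<in>permutations_of_set (Q - {x}). (-1) ^ (card Q - 1))"
    using sign by simp
  finally show ?thesis
    using assms x by (simp add: card_Diff_singleton)
qed

section \<open>Splitting off a cycle\<close>

lemma perm_restrict_permutes_cycle:
  assumes "s permutes A" "cyclic_on s Q"
  shows "perm_restrict s Q permutes Q"
proof (rule bij_imp_permutes)
  have "s ` Q \<subseteq> Q"
    using cyclic_on_inI[OF assms(2)] by auto
  moreover have "inj_on s Q"
    using permutes_inj_on[OF assms(1)] .
  ultimately have "s ` Q = Q"
    using endo_inj_surj[OF finite_cyclic_on[OF assms(2)]] by blast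
  with \<open>inj_on s Q\<close> have "bij_betw s Q Q"
    by (simp add: bij_betw_def)
  then show "bij_betw (perm_restrict s Q) Q Q"
    by (rule bij_betw_cong[THEN iffD1, rotated]) (simp add: perm_restrict_simps)
qed (simp add: perm_restrict_simps)

lemma perm_restrict_compose_disjoint:
  assumes "g permutes Q" "r permutes B" "Q \<inter> B = {}"
  shows "perm_restrict (g \<circ> r) Q = g" "perm_restrict (g \<circ> r) B = r"
proof -
  have "g (r x) = r x" if "x \<in> B" for x
  proof -
    have "r x \<notin> Q"
      using assms(2,3) that by (auto simp: permutes_in_image)
    then show ?thesis
      by (rule permutes_not_in[OF assms(1)])
  qed
  moreover have "r x = x" if "x \<in> Q" for x
    using assms(3) that by (blast intro: permutes_not_in[OF assms(2)])
  ultimately show "perm_restrict (g \<circ> r) Q = g" "perm_restrict (g \<circ> r) B = r"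
    using assms by (auto simp: fun_eq_iff perm_restrict_def permutes_not_in)
qed

lemma sum_permutes_with_cycle_split:
  assumes "Q \<subseteq> A"
  shows "(\<Sum>s | s permutes A \<and> cyclic_on s Q. f s) =
    (\<Sum>(g, r) \<in> cyclic_perms Q \<times> {r. r permutes A - Q}. f (g \<circ> r))"
proof (rule sum.reindex_bij_witness[where i = "\<lambda>(g, r). g \<circ> r"
      and j = "\<lambda>s. (perm_restrict s Q, perm_restrict s (A - Q))"])
  fix s assume s: "s \<in> {s. s permutes A \<and> cyclic_on s Q}"
  have Q: "perm_restrict s Q permutes Q"
    using perm_restrict_permutes_cycle s by blast
  have AQ: "perm_restrict s (A - Q) permutes A - Q"
    using perm_restrict_diff_cyclic s by blast
  have "perm_restrict s Q \<circ> perm_restrict s (A - Q) = s"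
    using perm_restrict_union[OF Q AQ] assms s by (simp add: Un_absorb1)
  then show "(\<lambda>(g, r). g \<circ> r) (perm_restrict s Q, perm_restrict s (A - Q)) = s"
    by simp
  then show "(case (perm_restrict s Q, perm_restrict s (A - Q)) of (g, r) \<Rightarrow> f (g \<circ> r)) = f s"
    by simp
  show "(perm_restrict s Q, perm_restrict s (A - Q)) \<in> cyclic_perms Q \<times> {r. r permutes A - Q}"
    using Q AQ s by (simp add: cyclic_perms_def cyclic_on_perm_restrict)
next
  fix p assume "p \<in> cyclic_perms Q \<times> {r. r permutes A - Q}"
  then obtain g r where p: "p = (g, r)" and g: "g permutes Q" "cyclic_on g Q"
    and r: "r permutes A - Q"
    by (auto simp: cyclic_perms_def)
  show "(perm_restrict ((\<lambda>(g, r). g \<circ> r) p) Q, perm_restrict ((\<lambda>(g, r). g \<circ> r) p) (A - Q)) = p"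
    using perm_restrict_compose_disjoint[OF g(1) r] p by auto
  have "g \<circ> r permutes A"
    using permutes_subset[OF g(1) assms] permutes_subset[OF r] by (auto intro: permutes_compose)
  moreover have "cyclic_on (g \<circ> r) Q"
    by (rule permutes_comp_preserves_cyclic1[OF r g(2), of Q]) auto
  ultimately show "(\<lambda>(g, r). g \<circ> r) p \<in> {s. s permutes A \<and> cyclic_on s Q}"
    using p by simp
qed

lemma sum_sign_permutes_with_cycle:
  assumes "finite A" "Q \<subseteq> A" "Q \<noteq> {}"
  shows "(\<Sum>s | s permutes A \<and> cyclic_on s Q. sign s * h (perm_restrict s (A - Q))) =
    (-1) ^ (card Q - 1) * fact (card Q - 1) * (\<Sum>r | r permutes A - Q. sign r * h r)"
proof -
  have "(\<Sum>s | s permutes A \<and> cyclic_on s Q. sign s * h (perm_restrict s (A - Q))) =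
      (\<Sum>(g, r) \<in> cyclic_perms Q \<times> {r. r permutes A - Q}. sign g * (sign r * h r))"
  proof -
    have "sign (g \<circ> r) * h (perm_restrict (g \<circ> r) (A - Q)) = sign g * (sign r * h r)"
      if "g \<in> cyclic_perms Q" "r permutes A - Q" for g r
    proof -
      have "g permutes Q"
        using that(1) by (simp add: cyclic_perms_def)
      then have "permutation g" "permutation r"
        using that(2) assms(1,2) finite_subset by (auto simp: permutation_permutes)
      then show ?thesis
        using perm_restrict_compose_disjoint(2)[OF \<open>g permutes Q\<close> that(2)]
        by (simp add: sign_compose)
    qed
    then show ?thesis
      unfolding sum_permutes_with_cycle_split[OF assms(2)] by (intro sum.cong) auto
  qed
  also have "\<dots> = (\<Sum>g\<in>cyclic_perms Q. sign g) * (\<Sum>r | r permutes A - Q. sign r * h r)"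
    by (simp add: sum_product sum.cartesian_product)
  finally show ?thesis
    using sum_sign_cyclic_perms[OF finite_subset[OF assms(2,1)] assms(3)] by simp
qed

section \<open>Cycle counts\<close>

definition cycle_count_on :: "'a set \<Rightarrow> nat \<Rightarrow> ('a \<Rightarrow> 'a) \<Rightarrow> nat" where
  "cycle_count_on A i s = card {orbit s x | x. x \<in> A \<and> card (orbit s x) = i}"

lemma cycles_of_length_eq_orbits:
  assumes "s permutes A" "finite A"
  shows "{Q. Q \<subseteq> A \<and> card Q = k \<and> cyclic_on s Q} = {orbit s x | x. x \<in> A \<and> card (orbit s x) = k}"
proof (intro set_eqI iffI)
  fix Q assume "Q \<in> {Q. Q \<subseteq> A \<and> card Q = k \<and> cyclic_on s Q}"
  then show "Q \<in> {orbit s x | x. x \<in> A \<and> card (orbit s x) = k}"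
    by (auto simp: cyclic_on_def)
next
  fix Q assume "Q \<in> {orbit s x | x. x \<in> A \<and> card (orbit s x) = k}"
  then show "Q \<in> {Q. Q \<subseteq> A \<and> card Q = k \<and> cyclic_on s Q}"
    using permutes_orbit_subset[OF assms(1)] cyclic_on_orbit[OF assms] by auto
qed

lemma orbit_perm_restrict_diff_cycle:
  assumes "s permutes A" "finite A" "cyclic_on s Q" "x \<in> A - Q"
  shows "orbit s x \<subseteq> A - Q" "orbit (perm_restrict s (A - Q)) x = orbit s x"
proof -
  have ps: "permutation s"
    using assms(1,2) by (auto simp: permutation_permutes)
  have "orbit s x \<inter> Q = {}"
  proof (rule ccontr)
    assume "orbit s x \<inter> Q \<noteq> {}"
    then obtain y where "y \<in> orbit s x" "y \<in> Q"
      by auto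
    then have "x \<in> orbit s y"
      using orbit_swap[OF permutation_self_in_orbit[OF ps]] by blast
    with \<open>y \<in> Q\<close> show False
      using orbit_cyclic_eq3[OF assms(3)] assms(4) by auto
  qed
  then show sub: "orbit s x \<subseteq> A - Q"
    using permutes_orbit_subset[OF assms(1)] assms(4) by auto
  show "orbit (perm_restrict s (A - Q)) x = orbit s x"
    by (rule orbit_cong[OF permutation_self_in_orbit[OF ps]])
      (use sub in \<open>auto simp: perm_restrict_simps\<close>)
qed

lemma cycle_count_on_perm_restrict_diff:
  assumes "s permutes A" "finite A" "cyclic_on s Q" "Q \<subseteq> A"
  shows "cycle_count_on (A - Q) i (perm_restrict s (A - Q)) =
    cycle_count_on A i s - (if i = card Q then 1 else 0)"
proof -
  let ?s' = "perm_restrict s (A - Q)"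
  let ?O = "{orbit s x | x. x \<in> A \<and> card (orbit s x) = i}"
  have "permutation s"
    using assms(1,2) by (auto simp: permutation_permutes)
  then have "x \<in> orbit s x" for x
    by (rule permutation_self_in_orbit)
  then have "{orbit ?s' x | x. x \<in> A - Q \<and> card (orbit ?s' x) = i} = ?O - {Q}"
  proof (intro set_eqI iffI)
    fix O' assume "O' \<in> {orbit ?s' x | x. x \<in> A - Q \<and> card (orbit ?s' x) = i}"
    then obtain x where "x \<in> A - Q" "O' = orbit s x" "card O' = i"
      using orbit_perm_restrict_diff_cycle(2)[OF assms(1-3)] by auto
    with \<open>x \<in> orbit s x\<close> show "O' \<in> ?O - {Q}"
      by blast
  next
    fix O' assume "O' \<in> ?O - {Q}"
    then obtain x where "x \<in> A" "O' = orbit s x" "card O' = i" "O' \<noteq> Q"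
      by blast
    moreover have "x \<notin> Q"
      using orbit_cyclic_eq3[OF assms(3)] calculation(2,4) by blast
    ultimately show "O' \<in> {orbit ?s' x | x. x \<in> A - Q \<and> card (orbit ?s' x) = i}"
      using orbit_perm_restrict_diff_cycle(2)[OF assms(1-3), of x] by auto
  qed
  moreover have "Q \<in> ?O \<longleftrightarrow> i = card Q"
    using cycles_of_length_eq_orbits[OF assms(1,2), of i] assms(3,4) by blast
  moreover have "finite ?O"
    using assms(2) by simp
  ultimately show ?thesis
    unfolding cycle_count_on_def by (simp add: card_Diff_singleton_if)
qed

definition binom_cycles :: "(nat \<Rightarrow> nat) \<Rightarrow> 'a set \<Rightarrow> ('a \<Rightarrow> 'a) \<Rightarrow> nat" where
  "binom_cycles a A s = (\<Prod>i | a i \<noteq> 0. cycle_count_on A i s choose a i)"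

lemma binom_cycles_remove_cycle:
  assumes "finite {i. a i \<noteq> 0}" "a k > 0" "s permutes A" "finite A"
  shows "a k * binom_cycles a A s =
    (\<Sum>Q | Q \<subseteq> A \<and> card Q = k \<and> cyclic_on s Q.
       binom_cycles (a(k := a k - 1)) (A - Q) (perm_restrict s (A - Q)))"
proof -
  let ?a' = "a(k := a k - 1)"
  let ?c = "\<lambda>i. cycle_count_on A i s"
  let ?S = "{i. a i \<noteq> 0}"
  let ?rest = "\<Prod>i\<in>?S - {k}. ?c i choose a i"
  have kS: "k \<in> ?S"
    using assms(2) by simp
  have removed: "binom_cycles ?a' (A - Q) (perm_restrict s (A - Q)) = (?c k - 1 choose (a k - 1)) * ?rest"
    if "Q \<subseteq> A" "card Q = k" "cyclic_on s Q" for Q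
  proof -
    let ?f = "\<lambda>i. (?c i - (if i = k then 1 else 0)) choose ?a' i"
    have "binom_cycles ?a' (A - Q) (perm_restrict s (A - Q)) = (\<Prod>i | ?a' i \<noteq> 0. ?f i)"
      unfolding binom_cycles_def
      using cycle_count_on_perm_restrict_diff[OF assms(3,4) that(3,1)] that(2) by simp
    also have "\<dots> = (\<Prod>i\<in>?S. ?f i)"
      by (rule prod.mono_neutral_left[OF assms(1)]) auto
    also have "\<dots> = ?f k * (\<Prod>i\<in>?S - {k}. ?f i)"
      by (rule prod.remove[OF assms(1) kS])
    also have "(\<Prod>i\<in>?S - {k}. ?f i) = ?rest"
      by (rule prod.cong) auto
    also have "?f k = ?c k - 1 choose (a k - 1)"
      by simp
    finally show ?thesis .
  qed
  have "(\<Sum>Q | Q \<subseteq> A \<and> card Q = k \<and> cyclic_on s Q.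
       binom_cycles ?a' (A - Q) (perm_restrict s (A - Q))) =
      card {Q. Q \<subseteq> A \<and> card Q = k \<and> cyclic_on s Q} * ((?c k - 1 choose (a k - 1)) * ?rest)"
    using removed by simp
  also have "card {Q. Q \<subseteq> A \<and> card Q = k \<and> cyclic_on s Q} = ?c k"
    unfolding cycles_of_length_eq_orbits[OF assms(3,4)] cycle_count_on_def ..
  also have "?c k * ((?c k - 1 choose (a k - 1)) * ?rest) = a k * (?c k choose a k) * ?rest"
    using times_binomial_minus1_eq[OF assms(2), of "?c k"] by simp
  also have "\<dots> = a k * binom_cycles a A s"
    unfolding binom_cycles_def prod.remove[OF assms(1) kS] by simp
  finally show ?thesis ..
qed

section \<open>The signed sum over all permutations\<close>

definition signed_binom_sum :: "'a set \<Rightarrow> (nat \<Rightarrow> nat) \<Rightarrow> int" where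
  "signed_binom_sum A a = (\<Sum>s | s permutes A. sign s * int (binom_cycles a A s))"

lemma signed_binom_sum_remove_part:
  assumes "is_partition a" "a k > 0" "finite A"
  shows "int (a k) * signed_binom_sum A a = (-1) ^ (k - 1) * fact (k - 1) *
    (\<Sum>Q | Q \<subseteq> A \<and> card Q = k. signed_binom_sum (A - Q) (a(k := a k - 1)))"
proof -
  let ?a' = "a(k := a k - 1)"
  let ?P = "{s. s permutes A}"
  let ?K = "{Q. Q \<subseteq> A \<and> card Q = k}"
  let ?g = "\<lambda>s Q. sign s * int (binom_cycles ?a' (A - Q) (perm_restrict s (A - Q)))"
  have "k > 0" and support: "finite {i. a i \<noteq> 0}"
    using assms(1,2) by (auto simp: is_partition_def intro: gr0I)
  have "int (a k) * (sign s * int (binom_cycles a A s)) = (\<Sum>Q\<in>{Q \<in> ?K. cyclic_on s Q}. ?g s Q)"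
    if "s permutes A" for s
  proof -
    have "int (a k) * (sign s * int (binom_cycles a A s)) = sign s * int (a k * binom_cycles a A s)"
      by simp
    also have "\<dots> = sign s *
        (\<Sum>Q\<in>{Q \<in> ?K. cyclic_on s Q}. int (binom_cycles ?a' (A - Q) (perm_restrict s (A - Q))))"
      using binom_cycles_remove_cycle[OF support assms(2) that assms(3)] by (simp add: conj_assoc)
    finally show ?thesis
      by (simp add: sum_distrib_left)
  qed
  then have "int (a k) * signed_binom_sum A a = (\<Sum>s\<in>?P. \<Sum>Q\<in>{Q \<in> ?K. cyclic_on s Q}. ?g s Q)"
    unfolding signed_binom_sum_def sum_distrib_left by (intro sum.cong) auto
  also have "\<dots> = (\<Sum>Q\<in>?K. \<Sum>s\<in>{s \<in> ?P. cyclic_on s Q}. ?g s Q)"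
    using assms(3) by (intro sum.swap_restrict) (simp_all add: finite_permutations)
  also have "\<dots> = (\<Sum>Q\<in>?K. (-1) ^ (k - 1) * fact (k - 1) * signed_binom_sum (A - Q) ?a')"
  proof (rule sum.cong[OF refl])
    fix Q assume "Q \<in> ?K"
    then have "Q \<subseteq> A" "card Q = k" "Q \<noteq> {}"
      using \<open>k > 0\<close> by auto
    then show "(\<Sum>s\<in>{s \<in> ?P. cyclic_on s Q}. ?g s Q) =
        (-1) ^ (k - 1) * fact (k - 1) * signed_binom_sum (A - Q) ?a'"
      using sum_sign_permutes_with_cycle[OF assms(3), of Q "\<lambda>r. int (binom_cycles ?a' (A - Q) r)"]
      by (simp add: signed_binom_sum_def)
  qed
  finally show ?thesis
    by (simp add: sum_distrib_left)
qed

section \<open>Removing a part from a partition\<close>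

lemma is_partition_remove_part:
  assumes "is_partition a"
  shows "is_partition (a(k := a k - 1))"
  using assms by (auto simp: is_partition_def elim: rev_finite_subset)

lemma
  assumes "finite {i. a i \<noteq> 0}" "a k > 0"
  shows part_size_remove_part: "part_size a = part_size (a(k := a k - 1)) + k"
    and part_length_remove_part: "part_length a = part_length (a(k := a k - 1)) + 1"
    and z_part_remove_part: "z_part a = z_part (a(k := a k - 1)) * (k * a k)"
proof -
  let ?S = "{i. a i \<noteq> 0}"
  let ?a' = "a(k := a k - 1)"
  obtain m where m: "a k = Suc m"
    using assms(2) gr0_implies_Suc by blast
  have k: "k \<in> ?S" and sub: "{i. ?a' i \<noteq> 0} \<subseteq> ?S"
    using m by auto
  have "part_size ?a' = (\<Sum>i\<in>?S. i * ?a' i)"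
    unfolding part_size_def by (rule sum.mono_neutral_left[OF assms(1) sub]) auto
  moreover have "part_size a = (\<Sum>i\<in>?S. i * ?a' i + (if i = k then k else 0))"
    unfolding part_size_def using m by (intro sum.cong) auto
  ultimately show "part_size a = part_size ?a' + k"
    using k assms(1) by (simp add: sum.distrib)
  have "part_length ?a' = (\<Sum>i\<in>?S. ?a' i)"
    unfolding part_length_def by (rule sum.mono_neutral_left[OF assms(1) sub]) auto
  moreover have "part_length a = (\<Sum>i\<in>?S. ?a' i + (if i = k then 1 else 0))"
    unfolding part_length_def using m by (intro sum.cong) auto
  ultimately show "part_length a = part_length ?a' + 1"
    using k assms(1) by (simp add: sum.distrib)
  have "z_part ?a' = (\<Prod>i\<in>?S. i ^ ?a' i * fact (?a' i))"
    unfolding z_part_def by (rule prod.mono_neutral_left[OF assms(1) sub]) auto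
  moreover have "z_part a = (\<Prod>i\<in>?S. i ^ ?a' i * fact (?a' i) * (if i = k then k * a k else 1))"
    unfolding z_part_def using m by (intro prod.cong) (auto simp: algebra_simps)
  ultimately show "z_part a = z_part ?a' * (k * a k)"
    using k assms(1) by (simp add: prod.distrib)
qed

lemma part_length_le_part_size:
  assumes "is_partition a"
  shows "part_length a \<le> part_size a"
  unfolding part_size_def part_length_def
proof (rule sum_mono)
  fix i assume "i \<in> {i. a i \<noteq> 0}"
  then have "i \<ge> 1"
    using assms by (cases i) (auto simp: is_partition_def)
  then show "a i \<le> i * a i"
    by simp
qed

lemma sgn_part_remove_part:
  assumes "is_partition a" "a k > 0"
  shows "sgn_part a = (-1) ^ (k - 1) * sgn_part (a(k := a k - 1))"
proof -
  let ?a' = "a(k := a k - 1)"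
  have "finite {i. a i \<noteq> 0}" "k > 0"
    using assms by (auto simp: is_partition_def intro: gr0I)
  moreover have "part_length ?a' \<le> part_size ?a'"
    using part_length_le_part_size[OF is_partition_remove_part[OF assms(1)]] .
  ultimately have "part_size a - part_length a = (k - 1) + (part_size ?a' - part_length ?a')"
    using part_size_remove_part[of a k] part_length_remove_part[of a k] assms(2) by linarith
  then show ?thesis
    unfolding sgn_part_def by (simp add: power_add)
qed

lemma z_part_pos:
  assumes "is_partition a"
  shows "z_part a > 0"
  unfolding z_part_def
  using assms by (intro prod_pos) (auto simp: is_partition_def intro: gr0I)

lemma fact_sgn_part_remove_part:
  assumes "is_partition a" "a k > 0"
  shows "(-1) ^ (k - 1) * fact k * int (n choose k) *
      (if n - k = part_size (a(k := a k - 1)) \<or> n - k = part_size (a(k := a k - 1)) + 1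
       then fact (n - k) * sgn_part (a(k := a k - 1)) else 0) =
    (if n = part_size a \<or> n = part_size a + 1 then fact n * sgn_part a else 0)"
proof -
  let ?a' = "a(k := a k - 1)"
  have size: "part_size a = part_size ?a' + k"
    using assms by (intro part_size_remove_part) (auto simp: is_partition_def)
  show ?thesis
  proof (cases "k \<le> n")
    case True
    have "(-1) ^ (k - 1) * fact k * int (n choose k) * (fact (n - k) * sgn_part ?a') =
        (fact k * int (n choose k) * fact (n - k)) * ((-1) ^ (k - 1) * sgn_part ?a')"
      by (simp only: mult_ac)
    also have "fact k * int (n choose k) * fact (n - k) = fact n"
      using arg_cong[OF binomial_fact_lemma[OF True], of int] by (simp add: mult_ac)
    finally have "(-1) ^ (k - 1) * fact k * int (n choose k) * (fact (n - k) * sgn_part ?a') =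
        fact n * sgn_part a"
      unfolding sgn_part_remove_part[OF assms] .
    moreover have "(n - k = part_size ?a' \<or> n - k = part_size ?a' + 1) \<longleftrightarrow>
        (n = part_size a \<or> n = part_size a + 1)"
      using True size by auto
    ultimately show ?thesis
      by simp
  next
    case False
    then show ?thesis
      using size by auto
  qed
qed

section \<open>The closed form\<close>

lemma sum_sign_permutes:
  assumes "finite B"
  shows "(\<Sum>s | s permutes B. sign s) = (if card B \<le> 1 then 1 else 0)"
proof (cases "card B \<le> 1")
  case True
  then have "card {s. s permutes B} = 1"
    using card_permutations[OF refl assms] by (cases "card B") auto
  then have "{s. s permutes B} = {id}"
    using permutes_id by (metis card_1_singletonE mem_Collect_eq singletonD)
  then show ?thesis
    using True by simp
next
  case False
  then obtain x y where xy: "x \<in> B" "y \<in> B" "x \<noteq> y"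
    using card_le_Suc0_iff_eq[OF assms] by auto
  let ?S = "\<Sum>s | s permutes B. sign s"
  have "?S = (\<Sum>s | s permutes B. sign (s \<circ> transpose x y))"
    by (rule sum_permutations_compose_right[OF permutes_swap_id[OF xy(1,2)]])
  also have "\<dots> = (\<Sum>s | s permutes B. - sign s)"
  proof (rule sum.cong[OF refl])
    fix s assume "s \<in> {s. s permutes B}"
    then have "permutation s"
      using assms by (auto simp: permutation_permutes)
    then show "sign (s \<circ> transpose x y) = - sign s"
      using xy by (simp add: sign_compose permutation_swap_id sign_swap_id)
  qed
  finally show ?thesis
    using False by (simp add: sum_negf)
qed

lemma z_part_signed_binom_sum:
  assumes "is_partition a" "finite A"
  shows "int (z_part a) * signed_binom_sum A a =
    (if card A = part_size a \<or> card A = part_size a + 1 then fact (card A) * sgn_part a else 0)"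
  using assms
proof (induction "part_length a" arbitrary: a A rule: less_induct)
  case less
  let ?n = "card A"
  show ?case
  proof (cases "\<forall>i. a i = 0")
    case True
    then have "part_size a = 0" "z_part a = 1" "sgn_part a = 1"
      "signed_binom_sum A a = (if ?n \<le> 1 then 1 else 0)"
      using sum_sign_permutes[OF less.prems(2)]
      by (simp_all add: part_size_def z_part_def sgn_part_def signed_binom_sum_def binom_cycles_def)
    then show ?thesis
      by (auto simp: le_Suc_eq)
  next
    case False
    then obtain k where k: "a k > 0"
      by auto
    let ?a' = "a(k := a k - 1)"
    have "k > 0" and support: "finite {i. a i \<noteq> 0}"
      using less.prems(1) k by (auto simp: is_partition_def intro: gr0I)
    have IH: "int (z_part ?a') * signed_binom_sum (A - Q) ?a' =
        (if ?n - k = part_size ?a' \<or> ?n - k = part_size ?a' + 1 then fact (?n - k) * sgn_part ?a' else 0)"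
      if "Q \<subseteq> A" "card Q = k" for Q
      using less.hyps[of ?a' "A - Q"] is_partition_remove_part[OF less.prems(1)]
        part_length_remove_part[OF support k] less.prems(2) that
      by (simp add: card_Diff_subset finite_subset)
    have fact_k: "fact k = int k * fact (k - 1)"
      by (rule fact_reduce[OF \<open>k > 0\<close>])
    have "int (z_part a) * signed_binom_sum A a = int (k * z_part ?a') * (int (a k) * signed_binom_sum A a)"
      using z_part_remove_part[OF support k] by simp
    also have "\<dots> = (-1) ^ (k - 1) * fact k *
        (\<Sum>Q | Q \<subseteq> A \<and> card Q = k. int (z_part ?a') * signed_binom_sum (A - Q) ?a')"
      unfolding signed_binom_sum_remove_part[OF less.prems(1) k less.prems(2)] fact_k
      by (simp add: sum_distrib_left mult_ac)
    also have "\<dots> = (-1) ^ (k - 1) * fact k * (?n choose k) *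
        (if ?n - k = part_size ?a' \<or> ?n - k = part_size ?a' + 1 then fact (?n - k) * sgn_part ?a' else 0)"
      using IH n_subsets[OF less.prems(2), of k] by simp
    also have "\<dots> = (if ?n = part_size a \<or> ?n = part_size a + 1 then fact ?n * sgn_part a else 0)"
      by (rule fact_sgn_part_remove_part[OF less.prems(1) k])
    finally show ?thesis .
  qed
qed

theorem theorem2p5:
  fixes a :: "nat \<Rightarrow> nat" and n :: nat
  assumes "is_partition a"
  shows "signed_moment n (binomX a n) =
    (if n = part_size a \<or> n = part_size a + 1
     then of_int (sgn_part a) / of_nat (z_part a) else 0)"
proof -
  have "binomX a n = (\<lambda>\<sigma>. of_nat (binom_cycles a {0..<n} \<sigma>))"
    by (simp add: fun_eq_iff binomX_def binom_cycles_def cycle_count_def cycle_count_on_def)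
  then have "signed_moment n (binomX a n) = of_int (signed_binom_sum {0..<n} a) / fact n"
    by (simp add: signed_moment_def signed_binom_sum_def)
  also have "of_int (signed_binom_sum {0..<n} a) =
      (of_int (int (z_part a) * signed_binom_sum {0..<n} a) / of_nat (z_part a) :: complex)"
    using z_part_pos[OF assms] by simp
  also have "int (z_part a) * signed_binom_sum {0..<n} a =
      (if n = part_size a \<or> n = part_size a + 1 then fact n * sgn_part a else 0)"
    using z_part_signed_binom_sum[OF assms, of "{0..<n}"] by simp
  finally show ?thesis
    by simp
qed

end
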